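(* Let $k\ge3$, let $G$ be a graph and $L$ a $k$-list assignment for $G$. Let $B$ be a bug in $G$ whose root $r$ has $d_G(r)=2$, and write $n=|V(G)|$. Then $B$ is safe in $G$ if at least one of the following holds: (i) there is no edge between $V(B)$ and $V(G)\setminus V(B)$; (ii) $3\le|V(B)|\le k$; (iii) $|V(B)|\ge5$; (iv) $|V(B)|=1$ and $n\not\equiv 0\pmod k$ and $n\not\equiv -1\pmod k$; (v) $|V(B)|=2$ and $n\not\equiv 0\pmod k$ and $n\not\equiv 1\pmod k$; (vi) $|V(B)|=4$, $k=3$ and $n\not\equiv0\pmod 3$.
   Context: $V_{3^+}(G)$ is the set of vertices of degree at least $3$ in $G$. A bug in $G$ is an induced connected subgraph $B$ together with a vertex $r\in V(B)$, its root, such that $V(B)\cap V_{3^+}(G)\subseteq\{r\}$. A $k$-list assignment $L$ assigns to each vertex $v$ a set $L(v)$ of exactly $k$ colors; an $L$-coloring is a proper vertex coloring $f$ with $f(v)\in L(v)$. For an integer $n$ and $k\ge1$, $n\bmod^* k$ is the unique $m\in\{1,\dots,k\}$ with $n\equiv m\pmod k$. If $|V(G)|=n\ge 1$, an $L$-coloring $f$ of $G$ is strongly equitable (SE) if every color class has at most $\lceil n/k\rceil$ vertices and the number of colors whose class has exactly $\lceil n/k\rceil$ vertices (the full classes) is at most $n\bmod^* k$; the empty graph is regarded as SE $L$-colorable. A subgraph $S\subseteq G$ is safe in $G$ if every SE $L$-coloring of $G-V(S)$ (with the restriction of $L$) can be extended to an SE $L$-coloring of $G$. *)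

theory Defs
  imports Main
begin

definition graph :: "'a set \<Rightarrow> ('a \<Rightarrow> 'a \<Rightarrow> bool) \<Rightarrow> bool" where
  "graph V E \<longleftrightarrow> finite V \<and>
     (\<forall>u v. E u v \<longrightarrow> u \<in> V \<and> v \<in> V \<and> u \<noteq> v \<and> E v u)"

definition degree :: "'a set \<Rightarrow> ('a \<Rightarrow> 'a \<Rightarrow> bool) \<Rightarrow> 'a \<Rightarrow> nat" where
  "degree V E v = card {u \<in> V. E v u}"

definition connected_induced :: "('a \<Rightarrow> 'a \<Rightarrow> bool) \<Rightarrow> 'a set \<Rightarrow> bool" where
  "connected_induced E S \<longleftrightarrow> S \<noteq> {} \<and>
     (\<forall>u\<in>S. \<forall>v\<in>S. (\<lambda>x y. x \<in> S \<and> y \<in> S \<and> E x y)\<^sup>*\<^sup>* u v)"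

definition bug :: "'a set \<Rightarrow> ('a \<Rightarrow> 'a \<Rightarrow> bool) \<Rightarrow> 'a set \<Rightarrow> 'a \<Rightarrow> bool" where
  "bug V E S r \<longleftrightarrow> S \<subseteq> V \<and> connected_induced E S \<and> r \<in> S \<and>
     {v \<in> S. degree V E v \<ge> 3} \<subseteq> {r}"

definition k_list_assignment :: "'a set \<Rightarrow> nat \<Rightarrow> ('a \<Rightarrow> 'c set) \<Rightarrow> bool" where
  "k_list_assignment V k L \<longleftrightarrow> (\<forall>v\<in>V. finite (L v) \<and> card (L v) = k)"

definition L_coloring :: "'a set \<Rightarrow> ('a \<Rightarrow> 'a \<Rightarrow> bool) \<Rightarrow> ('a \<Rightarrow> 'c set) \<Rightarrow> ('a \<Rightarrow> 'c) \<Rightarrow> bool" where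
  "L_coloring V E L f \<longleftrightarrow> (\<forall>v\<in>V. f v \<in> L v) \<and>
     (\<forall>u\<in>V. \<forall>v\<in>V. E u v \<longrightarrow> f u \<noteq> f v)"

definition modstar :: "nat \<Rightarrow> nat \<Rightarrow> nat" where
  "modstar n k = (if n mod k = 0 then k else n mod k)"

definition ceil_div :: "nat \<Rightarrow> nat \<Rightarrow> nat" where
  "ceil_div n k = (n + k - 1) div k"

definition SE_coloring :: "'a set \<Rightarrow> ('a \<Rightarrow> 'a \<Rightarrow> bool) \<Rightarrow> ('a \<Rightarrow> 'c set) \<Rightarrow> nat \<Rightarrow> ('a \<Rightarrow> 'c) \<Rightarrow> bool" where
  "SE_coloring V E L k f \<longleftrightarrow> L_coloring V E L f \<and>
     (V = {} \<or>
      ((\<forall>c. card {v \<in> V. f v = c} \<le> ceil_div (card V) k) \<and>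
       card {c. card {v \<in> V. f v = c} = ceil_div (card V) k} \<le> modstar (card V) k))"

definition safe :: "'a set \<Rightarrow> ('a \<Rightarrow> 'a \<Rightarrow> bool) \<Rightarrow> ('a \<Rightarrow> 'c set) \<Rightarrow> nat \<Rightarrow> 'a set \<Rightarrow> bool" where
  "safe V E L k S \<longleftrightarrow> (\<forall>f. SE_coloring (V - S) E L k f \<longrightarrow>
     (\<exists>g. SE_coloring V E L k g \<and> (\<forall>v \<in> V - S. g v = f v)))"

end

theory Submission
  imports Defs
begin

(* As the root has degree 2, every vertex of the bug has degree at most 2, so the bug is either a
   union of components of maximum degree 2 (case (i)) or an induced path of which only the first
   vertex has a neighbour outside.

   The tool is greedy extension: an SE colouring of G - T with |T| <= k extends to G if T can be
   ordered so that each vertex has fewer forbidden colours than list colours, the forbidden ones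
   being the colours of its outside neighbours, of the earlier vertices of T and, for the first few
   vertices, the at most |V(G - T)| mod k full colours.  Adding at most k vertices with distinct
   colours keeps the colouring strongly equitable as long as few of them take full colours.

   A closed part is removed in pieces of k vertices spanning k - 1 edges, or as whole components
   with fewer than k vertices.  A path is cut into an initial segment of (s - 1) mod k + 1 vertices
   at its attached end followed by blocks of k vertices, each joined to the rest by two edges; the
   conditions on n are exactly what makes the initial segment extendable, except when it is a
   single vertex and n - s = -1 mod k, where blocks of 2 and k - 1 vertices are used instead. *)

section \<open>Arithmetic of residues\<close>

lemma ceil_div_mult_add:
  assumes "1 \<le> r" "r \<le> k"
  shows "ceil_div (q * k + r) k = q + 1"
proof -
  have eq: "q * k + r + k - 1 = (r + k - 1) + q * k" using assms by simp
  have "(r + k - 1) div k = 1" using assms by (intro div_nat_eqI) auto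
  moreover have "(r + k - 1 + q * k) div k = q + (r + k - 1) div k"
    using assms by (intro div_mult_self1) simp
  ultimately show ?thesis unfolding ceil_div_def eq by simp
qed

lemma ceil_div_mult:
  assumes "1 \<le> k"
  shows "ceil_div (q * k) k = q"
proof -
  have eq: "q * k + k - 1 = (k - 1) + q * k" using assms by simp
  have "(k - 1 + q * k) div k = q + (k - 1) div k"
    using assms by (intro div_mult_self1) simp
  thus ?thesis unfolding ceil_div_def eq using assms by simp
qed

lemma modstar_mult_add:
  assumes "1 \<le> r" "r \<le> k"
  shows "modstar (q * k + r) k = r"
  using assms by (cases "r = k") (auto simp: modstar_def)

lemma ceil_div_pos:
  assumes "0 < N" "1 \<le> k"
  shows "1 \<le> ceil_div N k"
proof -
  have "k div k \<le> (N + k - 1) div k" using assms by (intro div_le_mono) simp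
  thus ?thesis unfolding ceil_div_def using assms by simp
qed

lemma mod_minus_1_cases:
  fixes n k :: nat
  assumes k: "0 < k" and n: "1 \<le> n" "n mod k \<noteq> 0" "Suc n mod k \<noteq> 0"
  shows "(n - 1) mod k = 0 \<or> (n - 1) mod k + 3 \<le> k"
proof -
  define m where "m = (n - 1) mod k"
  have "m < k" using k unfolding m_def by simp
  have n1: "n - 1 + 1 = n" "n - 1 + 2 = Suc n" using n(1) by simp_all
  have "(m + 1) mod k = n mod k" "(m + 2) mod k = Suc n mod k"
    unfolding m_def mod_add_left_eq n1 by (rule refl)+
  hence "m + 1 \<noteq> k" "m + 2 \<noteq> k" using n(2,3) by auto
  thus ?thesis using \<open>m < k\<close> unfolding m_def[symmetric] by linarith
qed

lemma mod_minus_2_cases: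
  fixes n k :: nat
  assumes k: "0 < k" and n: "2 \<le> n" "n mod k \<noteq> 0" "n mod k \<noteq> 1"
  shows "(n - 2) mod k = 0 \<or> (n - 2) mod k + 3 \<le> k"
proof -
  define m where "m = (n - 2) mod k"
  have "m < k" using k unfolding m_def by simp
  have n2: "n - 2 + 2 = n" using n(1) by simp
  have eq: "(m + 2) mod k = n mod k" unfolding m_def mod_add_left_eq n2 by (rule refl)
  hence "m + 2 \<noteq> k" using n(2) by auto
  moreover have "m + 1 \<noteq> k"
  proof
    assume "m + 1 = k"
    hence "m + 2 = 1 + k" by simp
    hence "n mod k = (1 + k) mod k" using eq by simp
    hence "n mod k = 1 mod k" by (simp only: mod_add_self2)
    thus False using n(2,3) by (cases "k = 1") auto
  qed
  ultimately show ?thesis using \<open>m < k\<close> unfolding m_def[symmetric] by linarith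
qed

lemma mod_add_2_eq_1:
  fixes x k :: nat
  assumes "2 \<le> k" "x mod k = k - 1"
  shows "(x + 2) mod k = 1"
proof -
  have "(x + 2) mod k = (k - 1 + 2) mod k" using mod_add_left_eq[of x k 2] assms(2) by simp
  also have "k - 1 + 2 = 1 + k" using assms(1) by simp
  finally show ?thesis using assms(1) by (simp only: mod_add_self2) simp
qed

section \<open>Adding distinctly coloured vertices\<close>

definition SE_class_sizes :: "nat \<Rightarrow> nat \<Rightarrow> ('c \<Rightarrow> nat) \<Rightarrow> bool" where
  "SE_class_sizes k N cnt \<longleftrightarrow>
     (\<forall>c. cnt c \<le> ceil_div N k) \<and> card {c. cnt c = ceil_div N k} \<le> modstar N k"

definition full_colours :: "nat \<Rightarrow> 'a set \<Rightarrow> ('a \<Rightarrow> 'c) \<Rightarrow> 'c set" where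
  "full_colours k W f = {c. card {v \<in> W. f v = c} = ceil_div (card W) k}"

lemma SE_coloring_iff_class_sizes:
  "V \<noteq> {} \<Longrightarrow> SE_coloring V E L k f \<longleftrightarrow>
     L_coloring V E L f \<and> SE_class_sizes k (card V) (\<lambda>c. card {v \<in> V. f v = c})"
  unfolding SE_coloring_def SE_class_sizes_def by simp

lemma SE_coloring_class_size_le:
  "SE_coloring V E L k f \<Longrightarrow> card {v \<in> V. f v = c} \<le> ceil_div (card V) k"
  unfolding SE_coloring_def by (cases "V = {}") auto

lemma SE_coloring_full_colours:
  assumes f: "SE_coloring V E L k f" and fin: "finite V" and k: "1 \<le> k"
    and m: "card V mod k \<noteq> 0"
  shows "finite (full_colours k V f)" "card (full_colours k V f) \<le> card V mod k"
proof -
  have "V \<noteq> {}" using m by (metis card.empty mod_0)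
  hence "1 \<le> ceil_div (card V) k" using fin k by (intro ceil_div_pos) auto
  hence "{v \<in> V. f v = c} \<noteq> {}" if "c \<in> full_colours k V f" for c
    using that unfolding full_colours_def by force
  hence "full_colours k V f \<subseteq> f ` V" by blast
  thus "finite (full_colours k V f)" using fin finite_surj by blast
  show "card (full_colours k V f) \<le> card V mod k"
    using f m \<open>V \<noteq> {}\<close> unfolding SE_coloring_def full_colours_def modstar_def by simp
qed

lemma SE_class_sizes_add_to_divisible:
  fixes cnt cnt' :: "'c \<Rightarrow> nat"
  assumes D: "1 \<le> card D" "card D \<le> k"
    and cnt': "\<And>c. cnt' c = cnt c + (if c \<in> D then 1 else 0)"
    and le: "\<And>c. cnt c \<le> q"
  shows "SE_class_sizes k (q * k + card D) cnt'"
proof -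
  have "finite D" using D(1) card.infinite by force
  have "c \<in> D" if "cnt' c = q + 1" for c
    using that cnt'[of c] le[of c] by (cases "c \<in> D") auto
  hence "{c. cnt' c = q + 1} \<subseteq> D" by blast
  hence "card {c. cnt' c = q + 1} \<le> card D" using \<open>finite D\<close> by (rule card_mono[rotated])
  moreover have "cnt' c \<le> q + 1" for c using cnt'[of c] le[of c] by simp
  ultimately show ?thesis
    unfolding SE_class_sizes_def ceil_div_mult_add[OF D] modstar_mult_add[OF D] by simp
qed

lemma SE_class_sizes_add_below_full:
  fixes cnt cnt' :: "'c \<Rightarrow> nat"
  assumes m: "1 \<le> m" "m + card D \<le> k" and fin: "finite D"
    and cnt': "\<And>c. cnt' c = cnt c + (if c \<in> D then 1 else 0)"
    and le: "\<And>c. cnt c \<le> q + 1"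
    and full: "finite {c. cnt c = q + 1}" "card {c. cnt c = q + 1} \<le> m"
    and avoid: "D \<inter> {c. cnt c = q + 1} = {}"
  shows "SE_class_sizes k (q * k + m + card D) cnt'"
proof -
  have r: "1 \<le> m + card D" "m + card D \<le> k" using m by auto
  have "cnt' c \<le> q + 1" for c
    using cnt'[of c] le[of c] avoid by (cases "c \<in> D") auto
  moreover have "{c. cnt' c = q + 1} \<subseteq> {c. cnt c = q + 1} \<union> D" using cnt' by auto
  hence "card {c. cnt' c = q + 1} \<le> card ({c. cnt c = q + 1} \<union> D)"
    using full fin by (intro card_mono) auto
  hence "card {c. cnt' c = q + 1} \<le> m + card D" using card_Un_le full by (meson add_right_mono order_trans)
  ultimately show ?thesis
    unfolding SE_class_sizes_def add.assoc ceil_div_mult_add[OF r] modstar_mult_add[OF r] by simp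
qed

lemma SE_class_sizes_add_overflow:
  fixes cnt cnt' :: "'c \<Rightarrow> nat"
  assumes over: "k < m + card D" "m \<le> k" "card D \<le> k" and fin: "finite D"
    and cnt': "\<And>c. cnt' c = cnt c + (if c \<in> D then 1 else 0)"
    and le: "\<And>c. cnt c \<le> q + 1"
    and few: "card (D \<inter> {c. cnt c = q + 1}) \<le> m + card D - k"
  shows "SE_class_sizes k (q * k + m + card D) cnt'"
proof -
  have r: "1 \<le> m + card D - k" "m + card D - k \<le> k" using over by auto
  have eq: "q * k + m + card D = (q + 1) * k + (m + card D - k)" using over by simp
  have "cnt' c \<le> q + 2" for c using cnt'[of c] le[of c] by simp
  moreover have "c \<in> D \<inter> {c. cnt c = q + 1}" if "cnt' c = q + 2" for c
    using that cnt'[of c] le[of c] by (cases "c \<in> D") auto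
  hence "{c. cnt' c = q + 2} \<subseteq> D \<inter> {c. cnt c = q + 1}" by blast
  hence "card {c. cnt' c = q + 2} \<le> m + card D - k"
    using fin few by (meson card_mono finite_Int order_trans)
  ultimately show ?thesis
    unfolding SE_class_sizes_def eq ceil_div_mult_add[OF r] modstar_mult_add[OF r] by simp
qed

text \<open>The last alternative of \<open>few\<close>: the new vertices push the total past a multiple of \<open>k\<close>,
  and the colours of \<open>D\<close> that were full become the new full classes, which must number at most
  \<open>(N + |D|) mod k\<close>.\<close>

lemma SE_class_sizes_add_distinct:
  fixes cnt cnt' :: "'c \<Rightarrow> nat"
  assumes k: "1 \<le> k" and D: "1 \<le> card D" "card D \<le> k"
    and cnt': "\<And>c. cnt' c = cnt c + (if c \<in> D then 1 else 0)"
    and le: "\<And>c. cnt c \<le> ceil_div N k"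
    and full: "N mod k \<noteq> 0 \<Longrightarrow>
      finite {c. cnt c = ceil_div N k} \<and> card {c. cnt c = ceil_div N k} \<le> N mod k"
    and few: "N mod k = 0 \<or> card (D \<inter> {c. cnt c = ceil_div N k}) = 0
      \<or> card (D \<inter> {c. cnt c = ceil_div N k}) + k \<le> N mod k + card D"
  shows "SE_class_sizes k (N + card D) cnt'"
proof -
  have fin: "finite D" using D(1) card.infinite by force
  define q m where "q = N div k" and "m = N mod k"
  have N: "N = q * k + m" unfolding q_def m_def by simp
  show ?thesis
  proof (cases "m = 0")
    case True
    hence "ceil_div N k = q" using N ceil_div_mult k by simp
    thus ?thesis using SE_class_sizes_add_to_divisible[OF D cnt'] le N True by simp
  next
    case False
    hence m: "1 \<le> m" "m \<le> k" using k unfolding m_def by (auto simp: less_imp_le)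
    hence ceil: "ceil_div N k = q + 1" using N ceil_div_mult_add by simp
    show ?thesis
    proof (cases "m + card D \<le> k")
      case True
      hence "card (D \<inter> {c. cnt c = q + 1}) = 0" using few False D(1) ceil unfolding m_def by auto
      hence "D \<inter> {c. cnt c = q + 1} = {}" using fin by simp
      hence "SE_class_sizes k (q * k + m + card D) cnt'"
        by (intro SE_class_sizes_add_below_full[OF m(1) True fin cnt'])
          (use le full False in \<open>simp_all add: ceil m_def\<close>)
      thus ?thesis using N by simp
    next
      case over: False
      have "card (D \<inter> {c. cnt c = q + 1}) \<le> m + card D - k"
        using few False ceil unfolding m_def by auto
      thus ?thesis using SE_class_sizes_add_overflow[OF _ m(2) D(2) fin cnt'] over le N ceil by simp
    qed
  qed
qed

lemma card_colour_class_override: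
  assumes fin: "finite V" and TV: "T \<subseteq> V" and inj: "inj_on g T"
  shows "card {v \<in> V. (if v \<in> T then g v else f v) = c}
    = card {v \<in> V - T. f v = c} + (if c \<in> g ` T then 1 else 0)"
proof -
  have finT: "finite T" using fin TV finite_subset by blast
  have "{v \<in> V. (if v \<in> T then g v else f v) = c} = {v \<in> V - T. f v = c} \<union> {v \<in> T. g v = c}"
    using TV by auto
  hence "card {v \<in> V. (if v \<in> T then g v else f v) = c}
      = card {v \<in> V - T. f v = c} + card {v \<in> T. g v = c}"
    using fin finT by (simp add: card_Un_disjoint disjoint_iff)
  moreover have "card {v \<in> T. g v = c} = (if c \<in> g ` T then 1 else 0)"
  proof (cases "c \<in> g ` T")
    case True
    then obtain x where "x \<in> T" "c = g x" by blast
    hence "{v \<in> T. g v = c} = {x}" using inj by (auto dest: inj_onD)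
    thus ?thesis using True by simp
  next
    case False
    hence "{v \<in> T. g v = c} = {}" by blast
    thus ?thesis using False by (metis card.empty)
  qed
  ultimately show ?thesis by simp
qed

lemma L_coloring_override:
  assumes sym: "\<And>u v. E u v \<Longrightarrow> E v u" and irrefl: "\<And>u. \<not> E u u"
    and f: "L_coloring (V - T) E L f"
    and g: "inj_on g T" "\<forall>x\<in>T. g x \<in> L x" "\<forall>x\<in>T. \<forall>u\<in>V - T. E x u \<longrightarrow> g x \<noteq> f u"
  shows "L_coloring V E L (\<lambda>v. if v \<in> T then g v else f v)"
  unfolding L_coloring_def
proof (intro conjI ballI impI)
  fix v assume "v \<in> V" thus "(if v \<in> T then g v else f v) \<in> L v"
    using f g(2) unfolding L_coloring_def by auto
next
  fix u v assume uv: "u \<in> V" "v \<in> V" "E u v"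
  have "u \<noteq> v" using uv(3) irrefl by auto
  show "(if u \<in> T then g u else f u) \<noteq> (if v \<in> T then g v else f v)"
  proof (cases "u \<in> T"; cases "v \<in> T")
    assume "u \<in> T" "v \<in> T"
    thus ?thesis using \<open>u \<noteq> v\<close> inj_onD[OF g(1)] by auto
  next
    assume "u \<in> T" "v \<notin> T"
    thus ?thesis using uv g(3) by auto
  next
    assume "u \<notin> T" "v \<in> T"
    thus ?thesis using uv sym[OF uv(3)] g(3) by fastforce
  next
    assume "u \<notin> T" "v \<notin> T"
    thus ?thesis using uv f unfolding L_coloring_def by auto
  qed
qed

lemma SE_coloring_extend:
  assumes sym: "\<And>u v. E u v \<Longrightarrow> E v u" and irrefl: "\<And>u. \<not> E u u"
    and fin: "finite V" and T: "T \<subseteq> V" "card T \<le> k" and k: "1 \<le> k"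
    and f: "SE_coloring (V - T) E L k f"
    and g: "inj_on g T" "\<forall>x\<in>T. g x \<in> L x" "\<forall>x\<in>T. \<forall>u\<in>V - T. E x u \<longrightarrow> g x \<noteq> f u"
    and few: "card (V - T) mod k = 0 \<or> card {x \<in> T. g x \<in> full_colours k (V - T) f} = 0
      \<or> card {x \<in> T. g x \<in> full_colours k (V - T) f} + k \<le> card (V - T) mod k + card T"
  shows "SE_coloring V E L k (\<lambda>v. if v \<in> T then g v else f v)"
proof (cases "T = {}")
  case True
  thus ?thesis using f by simp
next
  case False
  define N where "N = card (V - T)"
  define cnt where "cnt c = card {v \<in> V - T. f v = c}" for c
  have finT: "finite T" using fin T finite_subset by blast
  have cardT: "card (g ` T) = card T" using g(1) card_image by blast
  have cardV: "card V = N + card (g ` T)"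
    unfolding N_def cardT using card_Diff_subset[OF finT T(1)] card_mono[OF fin T(1)] by simp
  have full: "full_colours k (V - T) f = {c. cnt c = ceil_div N k}"
    unfolding full_colours_def cnt_def N_def ..
  have "g ` {x \<in> T. g x \<in> F} = g ` T \<inter> F" for F by auto
  hence card_full: "card {x \<in> T. g x \<in> F} = card (g ` T \<inter> F)" for F
    using card_image[OF inj_on_subset[OF g(1)], of "{x \<in> T. g x \<in> F}"] by auto
  have "card {x \<in> T. g x \<in> full_colours k (V - T) f}
      = card (g ` T \<inter> {c. cnt c = ceil_div N k})" unfolding full by (rule card_full)
  hence "SE_class_sizes k (N + card (g ` T))
      (\<lambda>c. card {v \<in> V. (if v \<in> T then g v else f v) = c})"
  proof (intro SE_class_sizes_add_distinct[OF k])
    show "1 \<le> card (g ` T)" "card (g ` T) \<le> k" using cardT T False finT by (auto simp: Suc_le_eq)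
    show "card {v \<in> V. (if v \<in> T then g v else f v) = c} = cnt c + (if c \<in> g ` T then 1 else 0)" for c
      unfolding cnt_def by (rule card_colour_class_override[OF fin T(1) g(1)])
    show "cnt c \<le> ceil_div N k" for c
      unfolding cnt_def N_def by (rule SE_coloring_class_size_le[OF f])
    show "N mod k \<noteq> 0 \<Longrightarrow>
        finite {c. cnt c = ceil_div N k} \<and> card {c. cnt c = ceil_div N k} \<le> N mod k"
      using SE_coloring_full_colours[OF f _ k] fin unfolding full N_def by simp
  qed (use few cardT in \<open>simp add: N_def\<close>)
  moreover have "L_coloring V E L (\<lambda>v. if v \<in> T then g v else f v)"
    using L_coloring_override[OF sym irrefl _ g] f unfolding SE_coloring_def by blast
  moreover have "V \<noteq> {}" using False T by blast
  ultimately show ?thesis unfolding SE_coloring_iff_class_sizes[OF \<open>V \<noteq> {}\<close>] cardV by blast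
qed

lemma greedy_distinct_choice:
  assumes "distinct xs" "\<forall>x\<in>set xs. finite (L x) \<and> card (L x) = k"
    and "\<forall>i<length xs. finite (F i) \<and> card (F i) + i < k"
  shows "\<exists>g. inj_on g (set xs) \<and> (\<forall>i<length xs. g (xs ! i) \<in> L (xs ! i) - F i)"
  using assms
proof (induction xs rule: rev_induct)
  case Nil thus ?case by simp
next
  case (snoc y xs)
  then obtain g where g: "inj_on g (set xs)" "\<forall>i<length xs. g (xs ! i) \<in> L (xs ! i) - F i"
    by auto
  define n where "n = length xs"
  have Fn: "finite (F n)" "card (F n) + n < k" using snoc.prems(3) n_def by auto
  have Ly: "finite (L y)" "card (L y) = k" using snoc.prems(2) by auto
  have "card (F n \<union> g ` set xs) \<le> card (F n) + n"
    using card_Un_le[of "F n" "g ` set xs"] card_image_le[of "set xs" g]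
      distinct_card[of xs] snoc.prems(1) n_def by auto
  hence "\<not> L y \<subseteq> F n \<union> g ` set xs" using Fn Ly card_mono[of "F n \<union> g ` set xs" "L y"] by auto
  then obtain c where c: "c \<in> L y" "c \<notin> F n" "c \<notin> g ` set xs" by auto
  have y: "y \<notin> set xs" using snoc.prems(1) by simp
  have "inj_on (g(y := c)) (set (xs @ [y]))" using g(1) c(3) y by (auto simp: inj_on_def)
  moreover have "(g(y := c)) ((xs @ [y]) ! i) \<in> L ((xs @ [y]) ! i) - F i"
    if i: "i < length (xs @ [y])" for i
  proof (cases "i < length xs")
    case True
    hence "xs ! i \<noteq> y" using y nth_mem by force
    thus ?thesis using g(2) True by (simp add: nth_append)
  next
    case False
    hence "i = n" using i n_def by simp
    thus ?thesis using c n_def by (simp add: nth_append)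
  qed
  ultimately show ?case by blast
qed

section \<open>Greedy extension\<close>

lemma safe_empty: "safe V E L k {}"
  unfolding safe_def by auto

lemma safe_Un:
  assumes "safe (V - B) E L k A" "safe V E L k B"
  shows "safe V E L k (A \<union> B)"
  unfolding safe_def
proof (intro allI impI)
  fix f assume "SE_coloring (V - (A \<union> B)) E L k f"
  moreover have "V - (A \<union> B) = (V - B) - A" by blast
  ultimately have "SE_coloring ((V - B) - A) E L k f" by simp
  then obtain g1 where g1: "SE_coloring (V - B) E L k g1" "\<forall>v\<in>(V - B) - A. g1 v = f v"
    using assms(1) unfolding safe_def by blast
  then obtain g2 where "SE_coloring V E L k g2" "\<forall>v\<in>V - B. g2 v = g1 v"
    using assms(2) unfolding safe_def by blast
  thus "\<exists>g. SE_coloring V E L k g \<and> (\<forall>v\<in>V - (A \<union> B). g v = f v)"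
    using g1(2) by (intro exI[of _ g2]) auto
qed

lemma k_list_assignment_subset: "k_list_assignment V k L \<Longrightarrow> W \<subseteq> V \<Longrightarrow> k_list_assignment W k L"
  unfolding k_list_assignment_def by blast

definition out_degree :: "'a set \<Rightarrow> ('a \<Rightarrow> 'a \<Rightarrow> bool) \<Rightarrow> 'a set \<Rightarrow> 'a \<Rightarrow> nat" where
  "out_degree V E T x = card {u \<in> V - T. E x u}"

text \<open>When \<open>t\<close> vertices are added to an SE colouring of \<open>N\<close> vertices, this many of them
  (the first ones in a greedy order) must avoid the full colours; the others may take them.\<close>

definition full_avoiders :: "nat \<Rightarrow> nat \<Rightarrow> nat \<Rightarrow> nat" where
  "full_avoiders k N t = (if N mod k = 0 \<or> t = k then 0 else min t (k - N mod k))"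

lemma full_avoiders_less: "i < full_avoiders k N t \<Longrightarrow> N mod k + i < k"
  unfolding full_avoiders_def by (auto split: if_splits)

lemma full_avoiders_few_full:
  fixes xs :: "'a list" and g :: "'a \<Rightarrow> 'c"
  assumes xs: "distinct xs" "length xs \<le> k" and g: "inj_on g (set xs)"
    and full: "N mod k \<noteq> 0 \<Longrightarrow> finite F \<and> card F \<le> N mod k"
    and avoid: "\<And>i. i < full_avoiders k N (length xs) \<Longrightarrow> g (xs ! i) \<notin> F"
  shows "N mod k = 0 \<or> card {x \<in> set xs. g x \<in> F} = 0
    \<or> card {x \<in> set xs. g x \<in> F} + k \<le> N mod k + length xs"
proof (cases "N mod k = 0")
  case m: False
  define A where "A = {x \<in> set xs. g x \<in> F}"
  have "card A = card (g ` A)" by (intro card_image[symmetric] inj_on_subset[OF g]) (auto simp: A_def)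
  also have "\<dots> \<le> card F" using full m by (intro card_mono) (auto simp: A_def)
  finally have AF: "card A \<le> N mod k" using full m by linarith
  show ?thesis
  proof (cases "length xs = k")
    case True thus ?thesis using AF unfolding A_def by simp
  next
    case False
    define a where "a = full_avoiders k N (length xs)"
    have a: "a = min (length xs) (k - N mod k)" using m False unfolding a_def full_avoiders_def by simp
    have "A \<subseteq> (\<lambda>i. xs ! i) ` {a..<length xs}"
    proof
      fix x assume x: "x \<in> A"
      then obtain i where i: "i < length xs" "x = xs ! i" unfolding A_def by (auto simp: in_set_conv_nth)
      moreover have "\<not> i < a" using avoid[of i] x i unfolding A_def a_def by auto
      ultimately show "x \<in> (\<lambda>i. xs ! i) ` {a..<length xs}" using i by auto
    qed
    hence "card A \<le> card ((\<lambda>i. xs ! i) ` {a..<length xs})" by (intro card_mono) simp_all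
    also have "\<dots> \<le> length xs - a" using card_image_le[of "{a..<length xs}"] by simp
    finally show ?thesis using a xs(2) unfolding A_def by (cases "length xs \<le> k - N mod k") auto
  qed
qed simp

lemma full_avoiders_le: "full_avoiders k N t \<le> t"
  unfolding full_avoiders_def by simp

lemma degree_split:
  assumes "finite V" "A \<subseteq> V" "y \<in> A"
  shows "degree V E y = out_degree V E A y + card {z \<in> A. E y z}"
proof -
  have "{u \<in> V. E y u} = {u \<in> V - A. E y u} \<union> {z \<in> A. E y z}" using assms by auto
  moreover have "finite {u \<in> V - A. E y u}" "finite {z \<in> A. E y z}"
    using assms finite_subset[OF assms(2)] by auto
  ultimately show ?thesis unfolding degree_def out_degree_def by (simp add: card_Un_disjoint disjoint_iff)
qed

context
  fixes V :: "'a set" and E :: "'a \<Rightarrow> 'a \<Rightarrow> bool" and L :: "'a \<Rightarrow> 'c set" and k :: nat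
  assumes sym: "\<And>u v. E u v \<Longrightarrow> E v u" and irrefl: "\<And>u. \<not> E u u"
    and fin: "finite V" and L: "k_list_assignment V k L"
begin

lemma greedy_colouring_along_order:
  assumes k: "1 \<le> k" and xs: "distinct xs" "set xs \<subseteq> V"
    and order: "\<And>i. i < length xs \<Longrightarrow> out_degree V E (set xs) (xs ! i)
      + (if i < full_avoiders k (card V - length xs) (length xs) then (card V - length xs) mod k else 0)
      + i < k"
    and f: "SE_coloring (V - set xs) E L k f"
  obtains g where "inj_on g (set xs)" "\<forall>x\<in>set xs. g x \<in> L x"
    "\<forall>x\<in>set xs. \<forall>u\<in>V - set xs. E x u \<longrightarrow> g x \<noteq> f u"
    "\<And>i. i < full_avoiders k (card V - length xs) (length xs) \<Longrightarrow>
      g (xs ! i) \<notin> full_colours k (V - set xs) f"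
proof -
  define N a Full where "N = card V - length xs" and "a = full_avoiders k N (length xs)"
    and "Full = full_colours k (V - set xs) f"
  have "card (V - set xs) = N" unfolding N_def using xs fin by (simp add: card_Diff_subset distinct_card)
  hence Full: "N mod k \<noteq> 0 \<Longrightarrow> finite Full \<and> card Full \<le> N mod k"
    using SE_coloring_full_colours[OF f _ k] fin unfolding Full_def by simp
  define nbrs where "nbrs i = {u \<in> V - set xs. E (xs ! i) u}" for i
  define F where "F i = f ` nbrs i \<union> (if i < a then Full else {})" for i
  have "\<forall>i<length xs. finite (F i) \<and> card (F i) + i < k"
  proof (intro allI impI)
    fix i assume i: "i < length xs"
    have "card (f ` nbrs i) \<le> out_degree V E (set xs) (xs ! i)"
      unfolding out_degree_def nbrs_def by (rule card_image_le) (use fin in simp)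
    moreover have "finite (F i) \<and> card (F i) \<le> card (f ` nbrs i) + (if i < a then N mod k else 0)"
    proof (cases "i < a")
      case True
      hence "N mod k \<noteq> 0" unfolding a_def full_avoiders_def by (auto split: if_splits)
      thus ?thesis using True Full card_Un_le[of "f ` nbrs i" Full] fin
        unfolding F_def nbrs_def by auto
    qed (use fin in \<open>simp add: F_def nbrs_def\<close>)
    ultimately show "finite (F i) \<and> card (F i) + i < k"
      using order[OF i] unfolding N_def a_def by linarith
  qed
  moreover have "\<forall>x\<in>set xs. finite (L x) \<and> card (L x) = k"
    using L xs(2) unfolding k_list_assignment_def by blast
  ultimately obtain g where g: "inj_on g (set xs)" "\<forall>i<length xs. g (xs ! i) \<in> L (xs ! i) - F i"
    using greedy_distinct_choice[OF xs(1)] by blast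
  show ?thesis
  proof (rule that[OF g(1)])
    show "\<forall>x\<in>set xs. g x \<in> L x" using g(2) by (auto simp: in_set_conv_nth)
    show "\<forall>x\<in>set xs. \<forall>u\<in>V - set xs. E x u \<longrightarrow> g x \<noteq> f u"
    proof (intro ballI impI)
      fix x u assume "x \<in> set xs" "u \<in> V - set xs" "E x u"
      moreover obtain i where "i < length xs" "x = xs ! i"
        using \<open>x \<in> set xs\<close> by (auto simp: in_set_conv_nth)
      ultimately have "f u \<in> F i" unfolding F_def nbrs_def by blast
      thus "g x \<noteq> f u" using g(2) \<open>i < length xs\<close> \<open>x = xs ! i\<close> by auto
    qed
    fix i assume i: "i < full_avoiders k (card V - length xs) (length xs)"
    hence "i < length xs" using full_avoiders_le[of k N "length xs"] unfolding N_def by linarith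
    moreover have "Full \<subseteq> F i" using i unfolding F_def a_def N_def by simp
    ultimately show "g (xs ! i) \<notin> full_colours k (V - set xs) f" using g(2) unfolding Full_def by blast
  qed
qed

lemma safe_greedy_order:
  assumes k: "1 \<le> k" and xs: "distinct xs" "set xs \<subseteq> V" "length xs \<le> k"
    and order: "\<And>i. i < length xs \<Longrightarrow> out_degree V E (set xs) (xs ! i)
      + (if i < full_avoiders k (card V - length xs) (length xs) then (card V - length xs) mod k else 0)
      + i < k"
  shows "safe V E L k (set xs)"
  unfolding safe_def
proof (intro allI impI)
  fix f assume f: "SE_coloring (V - set xs) E L k f"
  then obtain g where g: "inj_on g (set xs)" "\<forall>x\<in>set xs. g x \<in> L x"
    "\<forall>x\<in>set xs. \<forall>u\<in>V - set xs. E x u \<longrightarrow> g x \<noteq> f u"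
    "\<And>i. i < full_avoiders k (card V - length xs) (length xs) \<Longrightarrow>
      g (xs ! i) \<notin> full_colours k (V - set xs) f"
    using greedy_colouring_along_order[OF k xs(1,2) order] by blast
  have N: "card (V - set xs) = card V - length xs"
    using xs fin by (simp add: card_Diff_subset distinct_card)
  have "SE_coloring V E L k (\<lambda>v. if v \<in> set xs then g v else f v)"
  proof (rule SE_coloring_extend[OF sym irrefl fin xs(2) _ k f g(1-3)])
    show "card (set xs) \<le> k" using xs by (simp add: distinct_card)
    show "card (V - set xs) mod k = 0 \<or> card {x \<in> set xs. g x \<in> full_colours k (V - set xs) f} = 0
      \<or> card {x \<in> set xs. g x \<in> full_colours k (V - set xs) f} + k
        \<le> card (V - set xs) mod k + card (set xs)"
      using full_avoiders_few_full[OF xs(1,3) g(1)] SE_coloring_full_colours[OF f _ k] fin g(4)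
      unfolding N distinct_card[OF xs(1)] by blast
  qed
  thus "\<exists>h. SE_coloring V E L k h \<and> (\<forall>v\<in>V - set xs. h v = f v)" by fastforce
qed

lemma safe_greedy_prefix:
  assumes k: "1 \<le> k" and T: "distinct (pre @ ys)" "set (pre @ ys) = T" "T \<subseteq> V" "card T \<le> k"
    and ys: "\<forall>x\<in>set ys. out_degree V E T x = 0"
    and pre: "\<And>i. i < length pre \<Longrightarrow> out_degree V E T (pre ! i)
      + (if i < full_avoiders k (card V - card T) (card T) then (card V - card T) mod k else 0) + i < k"
  shows "safe V E L k T"
proof -
  have len: "length (pre @ ys) = card T" using T distinct_card by metis
  have "safe V E L k (set (pre @ ys))"
  proof (rule safe_greedy_order[OF k T(1)])
    show "set (pre @ ys) \<subseteq> V" "length (pre @ ys) \<le> k" using T len by simp_all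
    fix i assume i: "i < length (pre @ ys)"
    show "out_degree V E (set (pre @ ys)) ((pre @ ys) ! i)
      + (if i < full_avoiders k (card V - length (pre @ ys)) (length (pre @ ys))
         then (card V - length (pre @ ys)) mod k else 0) + i < k"
    proof (cases "i < length pre")
      case True thus ?thesis using pre[OF True] unfolding len T(2) by (simp add: nth_append)
    next
      case False
      hence "out_degree V E T ((pre @ ys) ! i) = 0" using ys i by (simp add: nth_append)
      thus ?thesis using full_avoiders_less[of i k] i len T by auto
    qed
  qed
  thus ?thesis using T(2) by simp
qed

lemma safe_no_out_edges:
  assumes k: "1 \<le> k" and T: "T \<subseteq> V" "card T \<le> k" and out: "\<forall>x\<in>T. out_degree V E T x = 0"
  shows "safe V E L k T"
proof -
  obtain ys where "set ys = T" "distinct ys"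
    using finite_distinct_list finite_subset[OF T(1) fin] by blast
  thus ?thesis using safe_greedy_prefix[OF k, of "[]" ys] T out by simp
qed

lemma safe_singleton:
  assumes k: "3 \<le> k" and p: "p \<in> V" "degree V E p \<le> 2"
    and m: "card V mod k \<noteq> 0" "(card V + 1) mod k \<noteq> 0"
  shows "safe V E L k {p}"
proof -
  have "out_degree V E {p} p \<le> 2" using degree_split[OF fin, of "{p}" p E] p by simp
  moreover have "1 \<le> card V" using p fin by (auto simp: Suc_le_eq card_gt_0_iff)
  hence "(card V - 1) mod k = 0 \<or> (card V - 1) mod k + 3 \<le> k" using mod_minus_1_cases k m by simp
  ultimately show ?thesis using safe_greedy_prefix[of "[p]" "[]"] p k by (auto simp: full_avoiders_def)
qed

lemma safe_one_out_edge:
  assumes k: "3 \<le> k" and T: "T \<subseteq> V" "card T \<le> k"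
    and p: "p \<in> T" "out_degree V E T p \<le> 1" and out: "\<forall>x\<in>T - {p}. out_degree V E T x = 0"
    and m: "2 \<le> card T \<or> (card V - card T) mod k \<noteq> k - 1"
  shows "safe V E L k T"
proof -
  have k1: "1 \<le> k" using k by simp
  have finT: "finite T" using fin T finite_subset by blast
  define m where "m = (card V - card T) mod k"
  have "m < k" unfolding m_def using k by simp
  show ?thesis
  proof (cases "m = k - 1 \<and> 2 \<le> card T")
    case True
    then obtain q where q: "q \<in> T" "q \<noteq> p"
      using p(1) finT by (metis card_le_Suc0_iff_eq not_less_eq_eq numeral_2_eq_2)
    obtain ys where ys: "set ys = T - {p, q}" "distinct ys"
      using finite_distinct_list[of "T - {p, q}"] finT by blast
    text \<open>The vertex with no outside neighbour goes first, as it alone has room to avoid the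
      \<open>k - 1\<close> full colours.\<close>
    have "full_avoiders k (card V - card T) (card T) \<le> 1"
      using True k unfolding full_avoiders_def m_def by auto
    thus ?thesis
      by (intro safe_greedy_prefix[OF k1 _ _ T, where pre="[q, p]" and ys=ys])
        (use ys q p out k in \<open>auto simp: less_Suc_eq\<close>)
  next
    case False
    hence "m = 0 \<or> m \<le> k - 2" using m \<open>m < k\<close> unfolding m_def by auto
    moreover obtain ys where ys: "set ys = T - {p}" "distinct ys"
      using finite_distinct_list[of "T - {p}"] finT by blast
    ultimately show ?thesis
      by (intro safe_greedy_prefix[OF k1 _ _ T, where pre="[p]" and ys=ys])
        (use ys p out k in \<open>auto simp: full_avoiders_def m_def split: if_splits\<close>)
  qed
qed

lemma safe_two_out_edges:
  assumes k: "3 \<le> k" and T: "T \<subseteq> V" "card T \<le> k"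
    and p: "p \<in> T" "out_degree V E T p \<le> 1" and q: "q \<in> T" "out_degree V E T q \<le> 1" "p \<noteq> q"
    and out: "\<forall>x\<in>T - {p, q}. out_degree V E T x = 0"
    and m: "card T = k \<or> (card V - card T) mod k = 0 \<or> (card V - card T) mod k + 3 \<le> k
      \<or> (3 \<le> card T \<and> 4 \<le> k)"
  shows "safe V E L k T"
proof -
  have k1: "1 \<le> k" using k by simp
  have finT: "finite T" using fin T finite_subset by blast
  define m a where "m = (card V - card T) mod k" and "a = full_avoiders k (card V - card T) (card T)"
  have "m < k" unfolding m_def using k by simp
  show ?thesis
  proof (cases "card T = k \<or> m = 0 \<or> m + 3 \<le> k")
    case True
    hence "a = 0 \<or> m + 3 \<le> k" unfolding a_def full_avoiders_def m_def by auto
    moreover obtain ys where ys: "set ys = T - {p, q}" "distinct ys"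
      using finite_distinct_list[of "T - {p, q}"] finT by blast
    ultimately show ?thesis
      by (intro safe_greedy_prefix[OF k1 _ _ T, where pre="[p, q]" and ys=ys])
        (use ys p q out k in \<open>auto simp: less_Suc_eq a_def m_def\<close>)
  next
    case False
    text \<open>At least \<open>k - 2\<close> colours are full, so a vertex without outside neighbours has to
      be among the first ones in the order.\<close>
    hence c: "3 \<le> card T" "4 \<le> k" "card T \<noteq> k" "k - 2 \<le> m" "m \<noteq> 0" using m unfolding m_def by auto
    hence "1 \<le> card (T - {p, q})" using p q finT by (simp add: card_Diff_subset)
    hence "T - {p, q} \<noteq> {}" by (metis card.empty not_one_le_zero)
    then obtain x where x: "x \<in> T" "x \<noteq> p" "x \<noteq> q" by blast
    obtain ys where ys: "set ys = T - {p, q, x}" "distinct ys"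
      using finite_distinct_list[of "T - {p, q, x}"] finT by blast
    have a: "a = min (card T) (k - m)" using c unfolding a_def full_avoiders_def m_def by auto
    show ?thesis
    proof (cases "m = k - 2")
      case True
      hence "a = 2" using a c by simp
      thus ?thesis
        by (intro safe_greedy_prefix[OF k1 _ _ T, where pre="[p, x, q]" and ys=ys])
          (use ys p q x out c True in \<open>auto simp: less_Suc_eq numeral_3_eq_3 a_def m_def\<close>)
    next
      case False
      hence "m = k - 1" "a = 1" using a c \<open>m < k\<close> by auto
      thus ?thesis
        by (intro safe_greedy_prefix[OF k1 _ _ T, where pre="[x, p, q]" and ys=ys])
          (use ys p q x out c in \<open>auto simp: less_Suc_eq numeral_3_eq_3 a_def m_def\<close>)
    qed
  qed
qed

lemma safe_out_degree_sum_le_2: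
  assumes k: "3 \<le> k" and T: "T \<subseteq> V" "card T = k" and sum: "(\<Sum>x\<in>T. out_degree V E T x) \<le> 2"
  shows "safe V E L k T"
proof -
  have finT: "finite T" using fin T finite_subset by blast
  define P where "P = {x \<in> T. 0 < out_degree V E T x}"
  have finP: "finite P" using finT unfolding P_def by simp
  have bound: "out_degree V E T x + (card P - 1) \<le> 2" if x: "x \<in> P" for x
  proof -
    have "card (P - {x}) \<le> (\<Sum>y\<in>P - {x}. out_degree V E T y)"
      using sum_mono[of "P - {x}" "\<lambda>_. 1::nat"] by (auto simp: P_def Suc_le_eq)
    moreover have "(\<Sum>y\<in>P. out_degree V E T y) = out_degree V E T x + (\<Sum>y\<in>P - {x}. out_degree V E T y)"
      using finP x by (simp add: sum.remove)
    moreover have "(\<Sum>y\<in>P. out_degree V E T y) \<le> (\<Sum>y\<in>T. out_degree V E T y)"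
      using finT by (intro sum_mono2) (auto simp: P_def)
    ultimately show ?thesis using x finP sum by simp
  qed
  obtain pre where pre: "set pre = P" "distinct pre" using finite_distinct_list[OF finP] by blast
  obtain ys where ys: "set ys = T - P" "distinct ys" using finite_distinct_list[of "T - P"] finT by blast
  have len: "length pre = card P" using pre distinct_card by metis
  have a: "full_avoiders k (card V - card T) (card T) = 0" using T by (simp add: full_avoiders_def)
  show ?thesis
  proof (rule safe_greedy_prefix[OF _ _ _ T(1), where pre=pre and ys=ys])
    fix i assume i: "i < length pre"
    hence "out_degree V E T (pre ! i) + (card P - 1) \<le> 2" using bound pre nth_mem by blast
    thus "out_degree V E T (pre ! i)
      + (if i < full_avoiders k (card V - card T) (card T) then (card V - card T) mod k else 0) + i < k"
      using a i len k by simp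
  qed (use pre ys T k in \<open>auto simp: P_def\<close>)
qed

end

section \<open>Closed parts of maximum degree 2\<close>

text \<open>Twice the number of edges inside \<open>A\<close>.\<close>

definition inner_degree_sum :: "('a \<Rightarrow> 'a \<Rightarrow> bool) \<Rightarrow> 'a set \<Rightarrow> nat" where
  "inner_degree_sum E A = (\<Sum>y\<in>A. card {z \<in> A. E y z})"

lemma inner_degree_sum_insert:
  assumes sym: "\<And>u v. E u v \<Longrightarrow> E v u" and fin: "finite A"
    and edge: "y \<in> A" "E y z" "z \<notin> A"
  shows "inner_degree_sum E A + 2 \<le> inner_degree_sum E (insert z A)"
proof -
  have "card {w \<in> insert z A. E u w} = card {w \<in> A. E u w} + (if E u z then 1 else 0)" if "u \<in> A" for u
  proof -
    have "{w \<in> insert z A. E u w} = (if E u z then insert z {w \<in> A. E u w} else {w \<in> A. E u w})" by auto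
    thus ?thesis using fin edge(3) by simp
  qed
  hence "(\<Sum>u\<in>A. card {w \<in> insert z A. E u w})
      = inner_degree_sum E A + (\<Sum>u\<in>A. if E u z then 1 else 0)"
    unfolding inner_degree_sum_def by (simp add: sum.distrib)
  moreover have "1 \<le> (\<Sum>u\<in>A. if E u z then 1 else 0::nat)"
    using member_le_sum[of y A "\<lambda>u. if E u z then 1 else 0::nat"] fin edge by simp
  moreover have "1 \<le> card {w \<in> insert z A. E z w}"
    using fin sym[OF edge(2)] edge(1) by (auto simp: Suc_le_eq card_gt_0_iff)
  moreover have "inner_degree_sum E (insert z A)
      = card {w \<in> insert z A. E z w} + (\<Sum>u\<in>A. card {w \<in> insert z A. E u w})"
    unfolding inner_degree_sum_def using fin edge(3) by simp
  ultimately show ?thesis by linarith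
qed

lemma grow_subset_many_edges:
  assumes sym: "\<And>u v. E u v \<Longrightarrow> E v u" and fin: "finite S" and x: "x \<in> S"
  shows "\<exists>A\<subseteq>S. x \<in> A \<and> 2 * (card A - 1) \<le> inner_degree_sum E A \<and>
    (card A = Suc j \<or> card A < Suc j \<and> (\<forall>y\<in>A. \<forall>z\<in>S. E y z \<longrightarrow> z \<in> A))"
proof (induction j)
  case 0
  show ?case by (rule exI[of _ "{x}"]) (use x in auto)
next
  case (Suc j)
  then obtain A where A: "A \<subseteq> S" "x \<in> A" "2 * (card A - 1) \<le> inner_degree_sum E A"
    "card A = Suc j \<or> card A < Suc j \<and> (\<forall>y\<in>A. \<forall>z\<in>S. E y z \<longrightarrow> z \<in> A)" by blast
  have finA: "finite A" using A(1) fin finite_subset by blast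
  show ?case
  proof (cases "\<forall>y\<in>A. \<forall>z\<in>S. E y z \<longrightarrow> z \<in> A")
    case True
    thus ?thesis using A by (intro exI[of _ A]) auto
  next
    case False
    then obtain y z where yz: "y \<in> A" "z \<in> S" "E y z" "z \<notin> A" by blast
    hence "card A = Suc j" using A(4) by blast
    moreover have "inner_degree_sum E A + 2 \<le> inner_degree_sum E (insert z A)"
      using inner_degree_sum_insert[where E = E, OF sym finA yz(1,3,4)] .
    ultimately show ?thesis using A yz finA by (intro exI[of _ "insert z A"]) auto
  qed
qed

lemma out_degree_sum_le_2:
  assumes fin: "finite V" and A: "A \<subseteq> V" "A \<noteq> {}" and deg: "\<forall>y\<in>A. degree V E y \<le> 2"
    and edges: "2 * (card A - 1) \<le> inner_degree_sum E A"
  shows "(\<Sum>y\<in>A. out_degree V E A y) \<le> 2"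
proof -
  have finA: "finite A" using fin A finite_subset by blast
  have "(\<Sum>y\<in>A. out_degree V E A y) + inner_degree_sum E A = (\<Sum>y\<in>A. degree V E y)"
    unfolding inner_degree_sum_def sum.distrib[symmetric] using degree_split[OF fin A(1)] by simp
  also have "\<dots> \<le> (\<Sum>y\<in>A. 2)" using deg by (intro sum_mono) auto
  finally show ?thesis using edges A(2) finA by (simp add: card_gt_0_iff)
qed

lemma safe_piece_of_closed_part:
  assumes sym: "\<And>u v. E u v \<Longrightarrow> E v u" and irrefl: "\<And>u. \<not> E u u" and k: "3 \<le> k"
    and fin: "finite V" and L: "k_list_assignment V k L" and S: "S \<subseteq> V"
    and closed: "\<forall>u\<in>S. \<forall>v\<in>V - S. \<not> E u v" and deg: "\<forall>v\<in>S. degree V E v \<le> 2"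
    and A: "A \<subseteq> S" "A \<noteq> {}" "2 * (card A - 1) \<le> inner_degree_sum E A"
      "card A = k \<or> card A < k \<and> (\<forall>y\<in>A. \<forall>z\<in>S. E y z \<longrightarrow> z \<in> A)"
  shows "safe V E L k A"
proof -
  have AV: "A \<subseteq> V" using A(1) S by blast
  show ?thesis
  proof (cases "card A = k")
    case True
    have "(\<Sum>y\<in>A. out_degree V E A y) \<le> 2"
      using out_degree_sum_le_2[OF fin AV A(2) _ A(3)] A(1) deg by blast
    thus ?thesis using safe_out_degree_sum_le_2[where E = E, OF sym irrefl fin L k AV True] by blast
  next
    case False
    hence "card A < k" "\<forall>y\<in>A. \<forall>z\<in>S. E y z \<longrightarrow> z \<in> A" using A(4) by auto
    hence "{u \<in> V - A. E y u} = {}" if "y \<in> A" for y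
      using that A(1) closed by blast
    hence "out_degree V E A y = 0" if "y \<in> A" for y
      using that unfolding out_degree_def by (metis card.empty)
    thus ?thesis using safe_no_out_edges[where E = E, OF sym irrefl fin L _ AV] \<open>card A < k\<close> k by auto
  qed
qed

lemma safe_closed_max_degree_2:
  assumes sym: "\<And>u v. E u v \<Longrightarrow> E v u" and irrefl: "\<And>u. \<not> E u u" and k: "3 \<le> k"
    and fin: "finite V" and L: "k_list_assignment V k L" and S: "S \<subseteq> V"
    and closed: "\<forall>u\<in>S. \<forall>v\<in>V - S. \<not> E u v" and deg: "\<forall>v\<in>S. degree V E v \<le> 2"
  shows "safe V E L k S"
  using fin L S closed deg
proof (induction "card S" arbitrary: V S rule: less_induct)
  case less
  note fin = less.prems(1) and L = less.prems(2) and S = less.prems(3)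
    and closed = less.prems(4) and deg = less.prems(5)
  show ?case
  proof (cases "S = {}")
    case True thus ?thesis by (simp add: safe_empty)
  next
    case False
    then obtain x where x: "x \<in> S" by blast
    have finS: "finite S" using fin S finite_subset by blast
    obtain A where A: "A \<subseteq> S" "x \<in> A" "2 * (card A - 1) \<le> inner_degree_sum E A"
      "card A = k \<or> card A < k \<and> (\<forall>y\<in>A. \<forall>z\<in>S. E y z \<longrightarrow> z \<in> A)"
      using grow_subset_many_edges[where E = E and j = "k - 1", OF sym finS x] k by auto
    have "safe V E L k A"
      using A by (intro safe_piece_of_closed_part[where E = E, OF sym irrefl k fin L S closed deg]) auto
    moreover have "safe (V - A) E L k (S - A)"
    proof (rule less.hyps)
      show "card (S - A) < card S" using finS A(2) x by (intro psubset_card_mono) auto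
      have "degree (V - A) E v \<le> degree V E v" for v
        unfolding degree_def using fin by (intro card_mono) auto
      thus "\<forall>v\<in>S - A. degree (V - A) E v \<le> 2" using deg by (auto intro: order_trans)
      show "finite (V - A)" using fin by simp
      show "k_list_assignment (V - A) k L" using L by (rule k_list_assignment_subset) blast
      show "S - A \<subseteq> V - A" using S by blast
      show "\<forall>u\<in>S - A. \<forall>v\<in>V - A - (S - A). \<not> E u v" using closed by blast
    qed
    ultimately have "safe V E L k ((S - A) \<union> A)" by (intro safe_Un)
    moreover have "(S - A) \<union> A = S" using A(1) by blast
    ultimately show ?thesis by simp
  qed
qed

section \<open>Induced paths\<close>

definition induced_path :: "('a \<Rightarrow> 'a \<Rightarrow> bool) \<Rightarrow> 'a list \<Rightarrow> bool" where
  "induced_path E vs \<longleftrightarrow> distinct vs \<and> (\<forall>i. Suc i < length vs \<longrightarrow> E (vs ! i) (vs ! Suc i)) \<and>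
     (\<forall>i<length vs. \<forall>j<length vs. E (vs ! i) (vs ! j) \<longrightarrow> i = Suc j \<or> j = Suc i)"

lemma connected_induced_remove_leaf:
  assumes conn: "connected_induced E S" and x: "x \<in> S" and y: "y \<in> S" "y \<noteq> x"
    and leaf: "\<forall>z\<in>S. E x z \<longrightarrow> z = y" "\<forall>z\<in>S. E z x \<longrightarrow> z = y"
  shows "connected_induced E (S - {x})"
proof -
  define R R' where "R = (\<lambda>a b. a \<in> S \<and> b \<in> S \<and> E a b)"
    and "R' = (\<lambda>a b. a \<in> S - {x} \<and> b \<in> S - {x} \<and> E a b)"
  text \<open>A walk in \<open>S\<close> from \<open>u \<noteq> x\<close> that visits the leaf \<open>x\<close> can stop at its neighbour \<open>y\<close>.\<close>
  have walk: "R\<^sup>*\<^sup>* u w \<Longrightarrow> u \<in> S - {x} \<Longrightarrow> R'\<^sup>*\<^sup>* u (if w = x then y else w)" for u w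
  proof (induction rule: rtranclp_induct)
    case (step w' w)
    have w: "w' \<in> S" "w \<in> S" "E w' w" using step(2) unfolding R_def by auto
    show ?case
    proof (cases "w' = x")
      case True thus ?thesis using step leaf(1) w y(2) by auto
    next
      case False
      hence "R'\<^sup>*\<^sup>* u w'" using step by simp
      moreover have "w = x \<Longrightarrow> w' = y" using leaf(2) w by blast
      moreover have "w \<noteq> x \<Longrightarrow> R' w' w" unfolding R'_def using w False by auto
      ultimately show ?thesis by (auto intro: rtranclp.rtrancl_into_rtrancl)
    qed
  qed simp
  show ?thesis unfolding connected_induced_def
  proof (intro conjI ballI)
    show "S - {x} \<noteq> {}" using y by blast
    fix u w assume "u \<in> S - {x}" "w \<in> S - {x}"
    moreover have "R\<^sup>*\<^sup>* u w" using conn calculation unfolding connected_induced_def R_def by auto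
    ultimately show "(\<lambda>a b. a \<in> S - {x} \<and> b \<in> S - {x} \<and> E a b)\<^sup>*\<^sup>* u w"
      using walk[of u w] unfolding R'_def by simp
  qed
qed

lemma induced_path_Cons:
  assumes sym: "\<And>u v. E u v \<Longrightarrow> E v u" and irrefl: "\<And>u. \<not> E u u"
    and P: "induced_path E vs" "vs \<noteq> []" and x: "x \<notin> set vs" "E x (hd vs)"
    and only: "\<forall>z\<in>set vs. E x z \<longrightarrow> z = hd vs"
  shows "induced_path E (x # vs)"
proof -
  have d: "distinct vs" and hd: "hd vs = vs ! 0" using P by (auto simp: induced_path_def hd_conv_nth)
  have first: "i = 0" if "i < length vs" "E x (vs ! i)" for i
    using only that nth_mem nth_eq_iff_index_eq[OF d, of i 0] P(2) hd by force
  have "i = Suc j \<or> j = Suc i"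
    if ij: "i < length (x # vs)" "j < length (x # vs)" "E ((x # vs) ! i) ((x # vs) ! j)" for i j
  proof (cases i; cases j)
    fix i' j' assume "i = Suc i'" "j = Suc j'"
    thus ?thesis using P(1) ij unfolding induced_path_def by auto
  qed (use ij irrefl sym first in auto)
  thus ?thesis
    using P x hd unfolding induced_path_def by (auto simp: nth_Cons split: nat.splits)
qed

lemma connected_max_degree_2_induced_path:
  assumes sym: "\<And>u v. E u v \<Longrightarrow> E v u" and irrefl: "\<And>u. \<not> E u u"
    and fin: "finite S" and conn: "connected_induced E S" and deg: "\<forall>v\<in>S. card {z \<in> S. E v z} \<le> 2"
    and x: "x \<in> S" "card {z \<in> S. E x z} \<le> 1"
  shows "\<exists>vs. induced_path E vs \<and> set vs = S \<and> vs \<noteq> [] \<and> hd vs = x"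
  using fin conn deg x
proof (induction "card S" arbitrary: S x rule: less_induct)
  case less
  note fin = less.prems(1) and conn = less.prems(2) and deg = less.prems(3) and x = less.prems(4,5)
  show ?case
  proof (cases "S = {x}")
    case True
    thus ?thesis using irrefl by (intro exI[of _ "[x]"]) (auto simp: induced_path_def)
  next
    case False
    then obtain w where "w \<in> S" "w \<noteq> x" using x by blast
    hence "(\<lambda>a b. a \<in> S \<and> b \<in> S \<and> E a b)\<^sup>*\<^sup>* x w" using conn x unfolding connected_induced_def by blast
    then obtain y where y: "y \<in> S" "E x y"
      using \<open>w \<noteq> x\<close> by (cases rule: converse_rtranclpE) auto
    have yx: "y \<noteq> x" using y irrefl by auto
    have only: "\<forall>z\<in>S. E x z \<longrightarrow> z = y"
      using x(2) y card_le_Suc0_iff_eq[of "{z \<in> S. E x z}"] fin by auto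
    define S' where "S' = S - {x}"
    have "\<forall>z\<in>S. E z x \<longrightarrow> z = y" using only sym by blast
    hence conn': "connected_induced E S'" unfolding S'_def
      using connected_induced_remove_leaf[OF conn x(1) y(1) yx only] by blast
    have "card {z \<in> S'. E v z} \<le> card {z \<in> S. E v z}" for v
      unfolding S'_def using fin by (intro card_mono) auto
    hence deg': "\<forall>v\<in>S'. card {z \<in> S'. E v z} \<le> 2"
      using deg unfolding S'_def by (auto intro: order_trans)
    have "{z \<in> S'. E y z} = {z \<in> S. E y z} - {x}" unfolding S'_def by auto
    moreover have "card {z \<in> S. E y z} \<le> 2" using deg y(1) by blast
    ultimately have y': "card {z \<in> S'. E y z} \<le> 1" using sym[OF y(2)] x(1) fin by simp
    have "card S' < card S" unfolding S'_def using fin x(1) by (rule card_Diff1_less)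
    moreover have "finite S'" "y \<in> S'" using fin y(1) yx unfolding S'_def by auto
    ultimately obtain vs where vs: "induced_path E vs" "set vs = S'" "vs \<noteq> []" "hd vs = y"
      using less.hyps[OF _ _ conn' deg' _ y'] by blast
    have "x \<notin> set vs" "E x (hd vs)" "\<forall>z\<in>set vs. E x z \<longrightarrow> z = hd vs"
      using vs(2,4) y(2) only unfolding S'_def by auto
    hence "induced_path E (x # vs)" by (intro induced_path_Cons[where E = E, OF sym irrefl vs(1,3)])
    thus ?thesis using vs(2) x(1) unfolding S'_def by (intro exI[of _ "x # vs"]) auto
  qed
qed

definition path_segment :: "'a list \<Rightarrow> nat \<Rightarrow> nat \<Rightarrow> 'a set" where
  "path_segment vs a b = (\<lambda>j. vs ! j) ` {a..<b}"

definition path_cut :: "'a set \<Rightarrow> 'a list \<Rightarrow> nat \<Rightarrow> 'a set" where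
  "path_cut V vs b = V - path_segment vs b (length vs)"

lemma path_segment_iff: "x \<in> path_segment vs a b \<longleftrightarrow> (\<exists>j. a \<le> j \<and> j < b \<and> x = vs ! j)"
  unfolding path_segment_def by auto

lemma card_path_segment:
  assumes "distinct vs" "b \<le> length vs"
  shows "card (path_segment vs a b) = b - a"
proof -
  have "inj_on (\<lambda>j. vs ! j) {a..<b}" using assms by (auto intro!: inj_onI simp: nth_eq_iff_index_eq)
  thus ?thesis unfolding path_segment_def by (simp add: card_image)
qed

lemma path_segment_Un: "a \<le> b \<Longrightarrow> b \<le> c \<Longrightarrow> path_segment vs a b \<union> path_segment vs b c = path_segment vs a c"
  unfolding path_segment_def by (metis image_Un ivl_disj_un_two(3))

lemma path_segment_all: "path_segment vs 0 (length vs) = set vs"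
  unfolding path_segment_def set_conv_nth by auto

lemma path_cut_length: "path_cut V vs (length vs) = V"
  unfolding path_cut_def path_segment_def by simp

lemma path_cut_Diff_segment:
  assumes "a \<le> b" "b \<le> length vs"
  shows "path_cut V vs b - path_segment vs a b = path_cut V vs a"
  using path_segment_Un[OF assms, of vs] unfolding path_cut_def by auto

lemma card_path_cut:
  assumes "finite V" "set vs \<subseteq> V" "distinct vs" "b \<le> length vs"
  shows "card (path_cut V vs b) = card V - (length vs - b)"
proof -
  have "path_segment vs b (length vs) \<subseteq> V" using assms(2) unfolding path_segment_def by auto
  thus ?thesis unfolding path_cut_def using assms(1) card_path_segment[OF assms(3), of "length vs" b]
    by (simp add: card_Diff_subset finite_subset)
qed

lemma nth_notin_path_cut_Diff_segment:
  assumes "a \<le> j" "j < length vs"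
  shows "vs ! j \<notin> path_cut V vs b - path_segment vs a b"
proof (cases "j < b")
  case True
  hence "vs ! j \<in> path_segment vs a b" unfolding path_segment_iff using assms(1) by blast
  thus ?thesis by blast
next
  case False
  hence "vs ! j \<in> path_segment vs b (length vs)" unfolding path_segment_iff using assms(2) by (intro exI[of _ j]) simp
  thus ?thesis unfolding path_cut_def by blast
qed

lemma path_segment_subset_path_cut:
  assumes "a \<le> b" "b \<le> length vs" "set vs \<subseteq> V" "distinct vs"
  shows "path_segment vs a b \<subseteq> path_cut V vs b"
proof
  fix x assume "x \<in> path_segment vs a b"
  then obtain j where j: "a \<le> j" "j < b" "x = vs ! j" by (auto simp: path_segment_iff)
  hence "x \<in> V" using assms(2,3) nth_mem[of j vs] by auto
  moreover have "x \<notin> path_segment vs b (length vs)"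
    using j assms(2,4) by (auto simp: path_segment_iff nth_eq_iff_index_eq)
  ultimately show "x \<in> path_cut V vs b" unfolding path_cut_def by simp
qed

lemma out_degree_path_segment:
  assumes sym: "\<And>u v. E u v \<Longrightarrow> E v u" and P: "induced_path E vs"
    and fin: "finite V" and vsV: "set vs \<subseteq> V" and deg: "\<forall>v\<in>set vs. degree V E v \<le> 2"
    and i: "a \<le> i" "i < b" "b \<le> length vs"
  shows "out_degree (path_cut V vs b) E (path_segment vs a b) (vs ! i)
    \<le> (if i = a then 1 else 0) + (if Suc i = length vs then 1 else 0)"
proof -
  have dist: "distinct vs" and step: "\<And>j. Suc j < length vs \<Longrightarrow> E (vs ! j) (vs ! Suc j)"
    using P unfolding induced_path_def by auto
  define N M where "N = {u \<in> V. E (vs ! i) u}"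
    and "M = (if Suc i < length vs then {vs ! Suc i} else {}) \<union> (if a < i then {vs ! (i - 1)} else {})"
  have "M \<subseteq> N"
    using step[of i] step[of "i - 1"] sym i vsV unfolding M_def N_def by (auto simp: Suc_diff_1)
  have "card M = (if Suc i < length vs then 1 else 0) + (if a < i then 1 else 0)"
    using dist i by (auto simp: M_def nth_eq_iff_index_eq)
  have "card N \<le> 2" using deg i nth_mem[of i vs] unfolding N_def degree_def by auto
  have "M \<subseteq> {vs ! j | j. a \<le> j \<and> j < length vs}" unfolding M_def using i by auto
  hence "{u \<in> path_cut V vs b - path_segment vs a b. E (vs ! i) u} \<inter> M = {}"
    using nth_notin_path_cut_Diff_segment[of a _ vs V b] by blast
  hence "{u \<in> path_cut V vs b - path_segment vs a b. E (vs ! i) u} \<subseteq> N - M"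
    unfolding N_def path_cut_def by blast
  hence "out_degree (path_cut V vs b) E (path_segment vs a b) (vs ! i) \<le> card (N - M)"
    unfolding out_degree_def N_def using fin by (intro card_mono) auto
  also have "\<dots> = card N - card M"
    using \<open>M \<subseteq> N\<close> fin by (intro card_Diff_subset) (auto simp: M_def)
  finally show ?thesis using \<open>card M = _\<close> \<open>card N \<le> 2\<close> i by auto
qed

context
  fixes V :: "'a set" and E :: "'a \<Rightarrow> 'a \<Rightarrow> bool" and L :: "'a \<Rightarrow> 'c set" and k :: nat
    and vs :: "'a list"
  assumes sym: "\<And>u v. E u v \<Longrightarrow> E v u" and irrefl: "\<And>u. \<not> E u u"
    and fin: "finite V" and L: "k_list_assignment V k L" and k: "3 \<le> k"
    and path: "induced_path E vs" and vsV: "set vs \<subseteq> V" and deg: "\<forall>v\<in>set vs. degree V E v \<le> 2"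
begin

lemma distinct_path: "distinct vs"
  using path unfolding induced_path_def by simp

lemma path_cut_segment_facts:
  assumes "a \<le> b" "b \<le> length vs"
  shows "finite (path_cut V vs b)" "k_list_assignment (path_cut V vs b) k L"
    "path_segment vs a b \<subseteq> path_cut V vs b" "card (path_segment vs a b) = b - a"
  using fin L path_segment_subset_path_cut[OF assms vsV distinct_path]
    card_path_segment[OF distinct_path assms(2)]
  by (auto simp: path_cut_def intro: k_list_assignment_subset)

lemma safe_path_segment_two_ends:
  assumes ab: "a + 2 \<le> b" "b \<le> length vs" "b - a \<le> k"
    and m: "b - a = k \<or> (card (path_cut V vs b) - (b - a)) mod k = 0
      \<or> (card (path_cut V vs b) - (b - a)) mod k + 3 \<le> k \<or> (3 \<le> b - a \<and> 4 \<le> k)"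
  shows "safe (path_cut V vs b) E L k (path_segment vs a b)"
proof -
  note W = path_cut_segment_facts[of a b]
  have out: "out_degree (path_cut V vs b) E (path_segment vs a b) (vs ! i)
      \<le> (if i = a then 1 else 0) + (if Suc i = length vs then 1 else 0)" if "a \<le> i" "i < b" for i
    using out_degree_path_segment[where E = E, OF sym path fin vsV deg that ab(2)] .
  have ends: "vs ! a \<in> path_segment vs a b" "vs ! (b - 1) \<in> path_segment vs a b"
    using ab unfolding path_segment_iff by (auto intro: exI[of _ a] exI[of _ "b - 1"])
  have "vs ! a \<noteq> vs ! (b - 1)" using ab distinct_path by (simp add: nth_eq_iff_index_eq)
  have inner: "\<forall>x\<in>path_segment vs a b - {vs ! a, vs ! (b - 1)}.
      out_degree (path_cut V vs b) E (path_segment vs a b) x = 0"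
  proof
    fix x assume "x \<in> path_segment vs a b - {vs ! a, vs ! (b - 1)}"
    then obtain i where "a \<le> i" "i < b" "x = vs ! i" "i \<noteq> a" "i \<noteq> b - 1" by (auto simp: path_segment_iff)
    moreover have "Suc i \<noteq> length vs" using calculation ab by linarith
    ultimately show "out_degree (path_cut V vs b) E (path_segment vs a b) x = 0" using out[of i] by auto
  qed
  have "out_degree (path_cut V vs b) E (path_segment vs a b) (vs ! a) \<le> 1" using out[of a] ab by simp
  moreover have "a \<le> b - 1" "b - 1 < b" "b - 1 \<noteq> a" using ab by auto
  hence "out_degree (path_cut V vs b) E (path_segment vs a b) (vs ! (b - 1)) \<le> 1"
    using out[of "b - 1"] by (simp split: if_splits)
  ultimately show ?thesis
    using ab m W
    by (intro safe_two_out_edges[where E = E, OF sym irrefl _ _ k _ _ ends(1) _ ends(2) _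
        \<open>vs ! a \<noteq> vs ! (b - 1)\<close> inner]) auto
qed

lemma safe_path_segment_one_end:
  assumes ab: "a < b" "b < length vs" "b - a \<le> k"
    and m: "2 \<le> b - a \<or> (card (path_cut V vs b) - (b - a)) mod k \<noteq> k - 1"
  shows "safe (path_cut V vs b) E L k (path_segment vs a b)"
proof -
  note W = path_cut_segment_facts[of a b]
  have out: "out_degree (path_cut V vs b) E (path_segment vs a b) (vs ! i) \<le> (if i = a then 1 else 0)"
    if "a \<le> i" "i < b" for i
    using out_degree_path_segment[where E = E, OF sym path fin vsV deg that] that ab by simp
  have first: "vs ! a \<in> path_segment vs a b" using ab by (auto simp: path_segment_iff)
  have inner: "\<forall>x\<in>path_segment vs a b - {vs ! a}. out_degree (path_cut V vs b) E (path_segment vs a b) x = 0"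
  proof
    fix x assume "x \<in> path_segment vs a b - {vs ! a}"
    then obtain i where "a \<le> i" "i < b" "x = vs ! i" "i \<noteq> a" by (auto simp: path_segment_iff)
    thus "out_degree (path_cut V vs b) E (path_segment vs a b) x = 0" using out[of i] by auto
  qed
  show ?thesis
    using out[of a] ab m W
    by (intro safe_one_out_edge[where E = E, OF sym irrefl _ _ k _ _ first _ inner]) auto
qed

lemma safe_path_by_blocks:
  assumes "c + j * k = length vs" "safe (path_cut V vs c) E L k (path_segment vs 0 c)"
  shows "safe V E L k (set vs)"
  using assms
proof (induction j arbitrary: c)
  case 0
  thus ?case using path_cut_length[of V vs] path_segment_all[of vs] by simp
next
  case (Suc j)
  have b: "c + k \<le> length vs" using Suc.prems(1) by simp
  have "safe (path_cut V vs (c + k)) E L k (path_segment vs c (c + k))"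
    using b k by (intro safe_path_segment_two_ends) auto
  moreover have "path_cut V vs (c + k) - path_segment vs c (c + k) = path_cut V vs c"
    using b by (intro path_cut_Diff_segment) auto
  ultimately have "safe (path_cut V vs (c + k)) E L k (path_segment vs 0 c \<union> path_segment vs c (c + k))"
    using Suc.prems(2) by (intro safe_Un) simp_all
  moreover have "path_segment vs 0 c \<union> path_segment vs c (c + k) = path_segment vs 0 (c + k)"
    by (intro path_segment_Un) auto
  ultimately show ?case using Suc.IH[of "c + k"] Suc.prems(1) by (simp add: add.assoc)
qed

lemma length_path_le: "length vs \<le> card V"
  using card_mono[OF fin vsV] distinct_card[OF distinct_path] by simp

lemma safe_short_path:
  assumes s: "2 \<le> length vs" "length vs \<le> k" and m: "3 \<le> length vs \<or> card V mod k \<notin> {0, 1}"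
  shows "safe V E L k (set vs)"
proof -
  have "length vs = k \<or> (card V - length vs) mod k = 0 \<or> (card V - length vs) mod k + 3 \<le> k
      \<or> (3 \<le> length vs \<and> 4 \<le> k)"
  proof (cases "length vs = 2")
    case True
    thus ?thesis using mod_minus_2_cases[of k "card V"] m k length_path_le by auto
  qed (use s k in auto)
  hence "safe (path_cut V vs (length vs)) E L k (path_segment vs 0 (length vs))"
    using s by (intro safe_path_segment_two_ends)
      (auto simp: path_cut_length)
  thus ?thesis by (simp add: path_cut_length path_segment_all)
qed

text \<open>If the first block would be a single vertex while \<open>k - 1\<close> colours are full, that vertex
  could not avoid them together with its outside neighbour; the first \<open>k + 1\<close> vertices are then
  split into blocks of \<open>2\<close> and \<open>k - 1\<close> vertices instead.\<close>

lemma safe_path_prefix_k_plus_1: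
  assumes s: "5 \<le> length vs" "k + 1 \<le> length vs" and m: "(card V - length vs) mod k = k - 1"
  shows "safe (path_cut V vs (k + 1)) E L k (path_segment vs 0 (k + 1))"
proof -
  note segment_lemmas = safe_path_segment_one_end safe_path_segment_two_ends
  have "safe (path_cut V vs 2) E L k (path_segment vs 0 2)"
    using s k by (intro segment_lemmas(1)) auto
  moreover have "safe (path_cut V vs (k + 1)) E L k (path_segment vs 2 (k + 1))"
  proof (cases "k = 3")
    case True thus ?thesis using s by (intro segment_lemmas(1)) auto
  next
    case False
    have "card (path_cut V vs (k + 1)) - (k + 1 - 2) = card V - length vs + 2"
      using card_path_cut[OF fin vsV distinct_path, of "k + 1"] s k length_path_le by simp
    hence "(card (path_cut V vs (k + 1)) - (k + 1 - 2)) mod k = 1"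
      using mod_add_2_eq_1[of k "card V - length vs"] m k by simp
    thus ?thesis using False s k by (intro segment_lemmas(2)) auto
  qed
  moreover have "path_cut V vs (k + 1) - path_segment vs 2 (k + 1) = path_cut V vs 2"
    using s k by (intro path_cut_Diff_segment) auto
  ultimately have "safe (path_cut V vs (k + 1)) E L k (path_segment vs 0 2 \<union> path_segment vs 2 (k + 1))"
    by (intro safe_Un) simp_all
  thus ?thesis using path_segment_Un[of 0 2 "k + 1" vs] k by simp
qed

lemma safe_long_path:
  assumes s: "k < length vs" and m: "5 \<le> length vs \<or> (length vs = 4 \<and> k = 3 \<and> card V mod 3 \<noteq> 0)"
  shows "safe V E L k (set vs)"
proof -
  define c q where "c = (length vs - 1) mod k + 1" and "q = (length vs - 1) div k"
  have c: "1 \<le> c" "c \<le> k" "c + q * k = length vs"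
    using k s unfolding c_def q_def by (auto simp: Suc_le_eq)
  show ?thesis
  proof (cases "c = 1 \<and> (card V - length vs) mod k = k - 1")
    case False
    have "card (path_cut V vs c) - (c - 0) = card V - length vs"
      using card_path_cut[OF fin vsV distinct_path, of c] c s length_path_le by simp
    hence "safe (path_cut V vs c) E L k (path_segment vs 0 c)"
      using False c s by (intro safe_path_segment_one_end) auto
    thus ?thesis using safe_path_by_blocks c(3) by blast
  next
    case True
    have "5 \<le> length vs"
    proof (rule ccontr)
      assume "\<not> 5 \<le> length vs"
      hence s4: "length vs = 4" "k = 3" "card V mod 3 \<noteq> 0" using m by auto
      have "card V mod 3 = (card V - 4 + 4) mod 3" using length_path_le s4 by simp
      also have "\<dots> = ((card V - 4) mod 3 + 4) mod 3" by (simp only: mod_add_left_eq)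
      finally show False using True s4 by simp
    qed
    moreover have "1 \<le> q" using True c s by (cases q) auto
    moreover have "k \<le> q * k" using \<open>1 \<le> q\<close> by simp
    hence "k + 1 \<le> length vs" using True c by linarith
    ultimately have "safe (path_cut V vs (k + 1)) E L k (path_segment vs 0 (k + 1))"
      using True by (intro safe_path_prefix_k_plus_1) auto
    moreover have "(k + 1) + (q - 1) * k = length vs" using c True \<open>1 \<le> q\<close>
      by (simp add: algebra_simps)
    ultimately show ?thesis using safe_path_by_blocks by blast
  qed
qed

lemma safe_induced_path:
  assumes "2 \<le> length vs"
    and "3 \<le> length vs \<and> length vs \<le> k \<or> 5 \<le> length vs
      \<or> length vs = 2 \<and> card V mod k \<noteq> 0 \<and> card V mod k \<noteq> 1
      \<or> length vs = 4 \<and> k = 3 \<and> card V mod 3 \<noteq> 0"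
  shows "safe V E L k (set vs)"
proof (cases "length vs \<le> k")
  case True thus ?thesis using assms by (intro safe_short_path) auto
next
  case False thus ?thesis using assms k by (intro safe_long_path) auto
qed

end

section \<open>Bugs\<close>

lemma bug_degree_le_2:
  assumes "bug V E S r" "degree V E r = 2"
  shows "\<forall>v\<in>S. degree V E v \<le> 2"
proof
  fix v assume "v \<in> S"
  thus "degree V E v \<le> 2" using assms unfolding bug_def by (cases "v = r") auto
qed

lemma bug_induced_path:
  assumes sym: "\<And>u v. E u v \<Longrightarrow> E v u" and irrefl: "\<And>u. \<not> E u u" and fin: "finite V"
    and bug: "bug V E S r" and deg: "\<forall>v\<in>S. degree V E v \<le> 2"
    and edge: "u \<in> S" "w \<in> V - S" "E u w"
  obtains vs where "induced_path E vs" "set vs = S"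
proof -
  have S: "S \<subseteq> V" "connected_induced E S" using bug unfolding bug_def by auto
  have finS: "finite S" using fin S(1) finite_subset by blast
  have inner: "card {z \<in> S. E v z} \<le> degree V E v" for v
    unfolding degree_def using fin S(1) by (intro card_mono) auto
  have "{z \<in> S. E u z} \<subseteq> {z \<in> V. E u z} - {w}" using S(1) edge(2) by auto
  hence "card {z \<in> S. E u z} \<le> degree V E u - 1"
    unfolding degree_def using card_mono[of "{z \<in> V. E u z} - {w}"] fin edge by auto
  hence "card {z \<in> S. E u z} \<le> 1" using deg edge(1) by fastforce
  thus ?thesis
    using connected_max_degree_2_induced_path[where E = E, OF sym irrefl finS S(2) _ edge(1)]
      inner deg that by (meson order_trans)
qed

theorem corollary4p5:
  fixes V :: "'a set" and E :: "'a \<Rightarrow> 'a \<Rightarrow> bool" and L :: "'a \<Rightarrow> 'c set"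
    and k :: nat and S :: "'a set" and r :: 'a
  assumes "k \<ge> 3"
    and "graph V E"
    and "k_list_assignment V k L"
    and "bug V E S r"
    and "degree V E r = 2"
    and "(\<not> (\<exists>u\<in>S. \<exists>v\<in>V - S. E u v))
         \<or> (3 \<le> card S \<and> card S \<le> k)
         \<or> card S \<ge> 5
         \<or> (card S = 1 \<and> card V mod k \<noteq> 0 \<and> (card V + 1) mod k \<noteq> 0)
         \<or> (card S = 2 \<and> card V mod k \<noteq> 0 \<and> card V mod k \<noteq> 1)
         \<or> (card S = 4 \<and> k = 3 \<and> card V mod 3 \<noteq> 0)"
  shows "safe V E L k S"
proof -
  have sym: "\<And>u v. E u v \<Longrightarrow> E v u" and irrefl: "\<And>u. \<not> E u u" and fin: "finite V"
    using assms(2) unfolding graph_def by blast+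
  have S: "S \<subseteq> V" "r \<in> S" using assms(4) unfolding bug_def by auto
  have deg: "\<forall>v\<in>S. degree V E v \<le> 2" using bug_degree_le_2[OF assms(4,5)] .
  show ?thesis
  proof (cases "\<exists>u\<in>S. \<exists>v\<in>V - S. E u v")
    case False
    thus ?thesis using safe_closed_max_degree_2[OF sym irrefl assms(1) fin assms(3) S(1) _ deg] by blast
  next
    case edge: True
    then obtain vs where vs: "induced_path E vs" "set vs = S"
      using bug_induced_path[where E = E, OF sym irrefl fin assms(4) deg] by blast
    have len: "card S = length vs" using vs distinct_card unfolding induced_path_def by metis
    show ?thesis
    proof (cases "card S = 1")
      case True
      hence "S = {r}" using S(2) by (metis card_1_singletonE singletonD)
      thus ?thesis using safe_singleton[where E = E, OF sym irrefl fin assms(3,1)] assms(6) edge True S deg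
        by auto
    next
      case False
      moreover have "0 < card S" using S fin by (auto simp: card_gt_0_iff intro: finite_subset)
      ultimately have "2 \<le> length vs" using len by linarith
      thus ?thesis using safe_induced_path[OF sym irrefl fin assms(3,1) vs(1) _ deg[folded vs(2)]]
        assms(6) edge S(1) len vs(2) by auto
    qed
  qed
qed

end
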